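(* Let $k$ be a field, $A$ a commutative $k$-algebra, and $I$ an ideal of $A\otimes_k k[x]_{(x)}$ such that $A\otimes_k k[x]_{(x)}/I$ is a free $A$-module of rank $n$. Then the $A$-module $A\otimes_k k[x]_{(x)}/I$ has a basis consisting of the classes of $1,x,\dots,x^{n-1}$.
   Context: $k[x]_{(x)}$ is the localization of $k[x]$ at the multiplicative set of polynomials $g(x)$ with $g(0)\neq0$. *)

theory Defs
  imports "HOL-Algebra.Ideal" "HOL-Computational_Algebra.Polynomial"
begin

text \<open>A commutative k-algebra A is a commutative ring A (type 'a) together with
a ring homomorphism phi from the field k (type 'k) into A (the structure map).\<close>
definition k_algebra_map :: "('k::field \<Rightarrow> 'a::comm_ring_1) \<Rightarrow> bool" where
  "k_algebra_map \<phi> \<longleftrightarrow> \<phi> 0 = 0 \<and> \<phi> 1 = 1 \<and>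
     (\<forall>x y. \<phi> (x + y) = \<phi> x + \<phi> y) \<and> (\<forall>x y. \<phi> (x * y) = \<phi> x * \<phi> y)"

text \<open>The multiplicative set of k[x]_(x): polynomials g with g(0) nonzero.\<close>
definition loc_den :: "'k::field poly set" where
  "loc_den = {g. poly g 0 \<noteq> 0}"

text \<open>A \<otimes>_k k[x]_(x) is realised as the localisation of A \<otimes>_k k[x] = A[x] at the
image of loc_den: fractions f / g with f in A[x], g in loc_den, modulo the usual
relation f/g = f'/g' iff s (f g' - f' g) = 0 for some s in loc_den.\<close>
definition loc_rel :: "('k::field \<Rightarrow> 'a::comm_ring_1) \<Rightarrow> (('a poly \<times> 'k poly) \<times> ('a poly \<times> 'k poly)) set" where
  "loc_rel \<phi> = {((f, g), (f', g')). g \<in> loc_den \<and> g' \<in> loc_den \<and>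
      (\<exists>s\<in>loc_den. map_poly \<phi> s * (f * map_poly \<phi> g' - f' * map_poly \<phi> g) = 0)}"

definition loc_class :: "('k::field \<Rightarrow> 'a::comm_ring_1) \<Rightarrow> 'a poly \<Rightarrow> 'k poly \<Rightarrow> ('a poly \<times> 'k poly) set" where
  "loc_class \<phi> f g = loc_rel \<phi> `` {(f, g)}"

definition loc_carrier :: "('k::field \<Rightarrow> 'a::comm_ring_1) \<Rightarrow> ('a poly \<times> 'k poly) set set" where
  "loc_carrier \<phi> = (UNIV \<times> loc_den) // loc_rel \<phi>"

definition loc_rep :: "('a poly \<times> 'k poly) set \<Rightarrow> 'a poly \<times> 'k poly" where
  "loc_rep X = (SOME p. p \<in> X)"

definition loc_add :: "('k::field \<Rightarrow> 'a::comm_ring_1) \<Rightarrow> ('a poly \<times> 'k poly) set \<Rightarrow> ('a poly \<times> 'k poly) set \<Rightarrow> ('a poly \<times> 'k poly) set" where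
  "loc_add \<phi> X Y = (case loc_rep X of (f, g) \<Rightarrow> case loc_rep Y of (f', g') \<Rightarrow>
      loc_class \<phi> (f * map_poly \<phi> g' + f' * map_poly \<phi> g) (g * g'))"

definition loc_mult :: "('k::field \<Rightarrow> 'a::comm_ring_1) \<Rightarrow> ('a poly \<times> 'k poly) set \<Rightarrow> ('a poly \<times> 'k poly) set \<Rightarrow> ('a poly \<times> 'k poly) set" where
  "loc_mult \<phi> X Y = (case loc_rep X of (f, g) \<Rightarrow> case loc_rep Y of (f', g') \<Rightarrow>
      loc_class \<phi> (f * f') (g * g'))"

definition loc_ring :: "('k::field \<Rightarrow> 'a::comm_ring_1) \<Rightarrow> ('a poly \<times> 'k poly) set ring" where
  "loc_ring \<phi> = \<lparr>carrier = loc_carrier \<phi>, monoid.mult = loc_mult \<phi>,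
      one = loc_class \<phi> 1 1, zero = loc_class \<phi> 0 1, add = loc_add \<phi>\<rparr>"

text \<open>The A-module structure: a in A acts as the element a \<otimes> 1 = a/1.\<close>
definition loc_scalar :: "('k::field \<Rightarrow> 'a::comm_ring_1) \<Rightarrow> 'a \<Rightarrow> ('a poly \<times> 'k poly) set" where
  "loc_scalar \<phi> a = loc_class \<phi> [:a:] 1"

definition loc_xpow :: "('k::field \<Rightarrow> 'a::comm_ring_1) \<Rightarrow> nat \<Rightarrow> ('a poly \<times> 'k poly) set" where
  "loc_xpow \<phi> i = loc_class \<phi> (monom 1 i) 1"

definition quot_basis :: "('k::field \<Rightarrow> 'a::comm_ring_1) \<Rightarrow> ('a poly \<times> 'k poly) set set \<Rightarrow> nat \<Rightarrow>
    (nat \<Rightarrow> ('a poly \<times> 'k poly) set) \<Rightarrow> bool" where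
  "quot_basis \<phi> I n b \<longleftrightarrow>
     (\<forall>i<n. b i \<in> carrier (loc_ring \<phi>)) \<and>
     (\<forall>y\<in>carrier (loc_ring \<phi>). \<exists>c::nat \<Rightarrow> 'a. \<exists>z\<in>I.
        y = (\<Oplus>\<^bsub>loc_ring \<phi>\<^esub> i\<in>{..<n}. loc_scalar \<phi> (c i) \<otimes>\<^bsub>loc_ring \<phi>\<^esub> b i) \<oplus>\<^bsub>loc_ring \<phi>\<^esub> z) \<and>
     (\<forall>c::nat \<Rightarrow> 'a. (\<Oplus>\<^bsub>loc_ring \<phi>\<^esub> i\<in>{..<n}. loc_scalar \<phi> (c i) \<otimes>\<^bsub>loc_ring \<phi>\<^esub> b i) \<in> I
        \<longrightarrow> (\<forall>i<n. c i = 0))"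

end

theory Submission
  imports Defs "HOL-Algebra.QuotRing" "Jordan_Normal_Form.Char_Poly"
begin

text \<open>Write B for the quotient ring, an A-algebra that is free of rank n as an A-module, and \<xi>
  for the class of x. By the determinant trick every element of B is a root of a monic polynomial
  of degree n over A. For the inverse u of an element G, multiplying such an equation by G^n
  expresses u as a polynomial in G. Every element of B is a polynomial in \<xi> times the inverse of
  another one, so B = A[\<xi>], and division by a monic polynomial of degree n annihilating \<xi> shows
  that 1, \<xi>, ..., \<xi>^(n-1) generate B. Finally, n generators of a free module of rank n form
  a basis.\<close>

section \<open>Matrices over commutative rings\<close>

lemma index_mult_mat_sum:
  assumes "A \<in> carrier_mat nr n" and "B \<in> carrier_mat n nc" and "i < nr" and "j < nc"
  shows "(A * B) $$ (i, j) = (\<Sum>k<n. A $$ (i, k) * B $$ (k, j))"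
  using assms by (simp add: scalar_prod_def atLeast0LessThan)

lemma mat_left_inverse_imp_right_inverse:
  fixes P Q :: "'a::comm_ring_1 mat"
  assumes P: "P \<in> carrier_mat n n" and Q: "Q \<in> carrier_mat n n" and QP: "Q * P = 1\<^sub>m n"
  shows "P * Q = 1\<^sub>m n"
proof -
  have det: "det Q * det P = 1" using det_mult[OF Q P] QP by simp
  have adj: "adj_mat P \<in> carrier_mat n n" "P * adj_mat P = det P \<cdot>\<^sub>m 1\<^sub>m n"
    using adj_mat[OF P] by auto
  have P_adj_carrier: "P * adj_mat P \<in> carrier_mat n n" using P adj(1) by simp
  have P_adj: "det Q \<cdot>\<^sub>m (P * adj_mat P) = 1\<^sub>m n"
    unfolding adj(2) by (auto simp: det mult.assoc[symmetric])
  have "Q = Q * (det Q \<cdot>\<^sub>m (P * adj_mat P))" unfolding P_adj using Q by simp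
  also have "\<dots> = det Q \<cdot>\<^sub>m (Q * P * adj_mat P)"
    using P Q adj(1) by (simp add: mult_smult_distrib[OF Q P_adj_carrier] assoc_mult_mat)
  also have "\<dots> = det Q \<cdot>\<^sub>m adj_mat P"
    using adj(1) by (simp add: QP)
  finally have "P * Q = P * (det Q \<cdot>\<^sub>m adj_mat P)" by simp
  also have "\<dots> = det Q \<cdot>\<^sub>m (P * adj_mat P)" by (rule mult_smult_distrib[OF P adj(1)])
  finally show ?thesis using P_adj by simp
qed

lemma right_invertible_mat_left_kernel:
  fixes P Q :: "'a::comm_ring_1 mat"
  assumes P: "P \<in> carrier_mat n n" and Q: "Q \<in> carrier_mat n n" and PQ: "P * Q = 1\<^sub>m n"
    and cP: "\<And>j. j < n \<Longrightarrow> (\<Sum>i<n. c i * P $$ (i, j)) = 0" and l: "l < n"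
  shows "c l = 0"
proof -
  have "c l = (\<Sum>i<n. c i * (P * Q) $$ (i, l))"
    using l by (simp add: PQ if_distrib[where f = "\<lambda>x. _ * x"] cong: if_cong)
  also have "\<dots> = (\<Sum>i<n. \<Sum>j<n. c i * P $$ (i, j) * Q $$ (j, l))"
    using index_mult_mat_sum[OF P Q] l by (simp add: sum_distrib_left mult.assoc)
  also have "\<dots> = (\<Sum>j<n. (\<Sum>i<n. c i * P $$ (i, j)) * Q $$ (j, l))"
    by (subst sum.swap) (simp add: sum_distrib_right)
  also have "\<dots> = 0" by (simp add: cP)
  finally show ?thesis .
qed

section \<open>Algebras that are free modules of finite rank\<close>

definition poly_eval :: "('c, 'm) ring_scheme \<Rightarrow> ('a::comm_ring_1 \<Rightarrow> 'c) \<Rightarrow> 'a poly \<Rightarrow> 'c \<Rightarrow> 'c" where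
  "poly_eval B \<tau> p y = (\<Oplus>\<^bsub>B\<^esub> i\<in>{..degree p}. \<tau> (coeff p i) \<otimes>\<^bsub>B\<^esub> y [^]\<^bsub>B\<^esub> i)"

locale cring_algebra = cring B for B :: "('c, 'm) ring_scheme" (structure) +
  fixes \<tau> :: "'a::comm_ring_1 \<Rightarrow> 'c"
  assumes scalar_closed [simp]: "\<tau> a \<in> carrier B"
    and scalar_add: "\<tau> (a + b) = \<tau> a \<oplus> \<tau> b"
    and scalar_mult: "\<tau> (a * b) = \<tau> a \<otimes> \<tau> b"
    and scalar_one [simp]: "\<tau> 1 = \<one>"
begin

abbreviation ev :: "'a poly \<Rightarrow> 'c \<Rightarrow> 'c" where
  "ev p y \<equiv> poly_eval B \<tau> p y"

lemma scalar_zero [simp]: "\<tau> 0 = \<zero>"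
proof -
  have "\<tau> 0 \<oplus> \<tau> 0 = \<tau> 0 \<oplus> \<zero>" using scalar_add[of 0 0] by simp
  then show ?thesis by simp
qed

lemma scalar_sum: "\<tau> (sum f K) = (\<Oplus>k\<in>K. \<tau> (f k))"
proof (cases "finite K")
  case True
  then show ?thesis by (induct K rule: finite_induct) (auto simp: scalar_add)
qed (simp add: finsum_infinite)

lemma poly_eval_closed [simp]: "y \<in> carrier B \<Longrightarrow> ev p y \<in> carrier B"
  unfolding poly_eval_def by (auto intro!: finsum_closed)

lemma poly_eval_bound:
  assumes "y \<in> carrier B" and "degree p < N"
  shows "ev p y = (\<Oplus>i\<in>{..<N}. \<tau> (coeff p i) \<otimes> y [^] i)"
  unfolding poly_eval_def
proof (rule add.finprod_mono_neutral_cong_left)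
  fix i assume "i \<in> {..<N} - {..degree p}"
  then have "coeff p i = 0" by (simp add: coeff_eq_0)
  then show "\<tau> (coeff p i) \<otimes> y [^] i = \<zero>" using assms by simp
qed (use assms in auto)

lemma poly_eval_0 [simp]: "y \<in> carrier B \<Longrightarrow> ev 0 y = \<zero>"
  unfolding poly_eval_def by simp

lemma poly_eval_pCons:
  assumes y: "y \<in> carrier B"
  shows "ev (pCons c p) y = \<tau> c \<oplus> y \<otimes> ev p y"
proof -
  have "ev (pCons c p) y = (\<Oplus>i\<in>{..<Suc (Suc (degree p))}. \<tau> (coeff (pCons c p) i) \<otimes> y [^] i)"
    by (rule poly_eval_bound[OF y]) (simp add: degree_pCons_le le_imp_less_Suc)
  also have "\<dots> = (\<Oplus>i\<in>{..degree p}. \<tau> (coeff p i) \<otimes> y [^] Suc i) \<oplus> \<tau> c"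
    unfolding lessThan_Suc_atMost by (subst finsum_Suc2) (use y in auto)
  also have "(\<Oplus>i\<in>{..degree p}. \<tau> (coeff p i) \<otimes> y [^] Suc i) = y \<otimes> ev p y"
    unfolding poly_eval_def
    by (subst finsum_rdistr) (use y in \<open>auto intro!: finsum_cong simp: m_ac\<close>)
  finally show ?thesis using y by (simp add: a_comm)
qed

lemma poly_eval_add:
  assumes y: "y \<in> carrier B"
  shows "ev (p + q) y = ev p y \<oplus> ev q y"
proof -
  define N where "N = Suc (max (degree p) (degree q))"
  have d: "degree (p + q) < N" "degree p < N" "degree q < N"
    unfolding N_def using degree_add_le_max[of p q] by auto
  show ?thesis
    unfolding poly_eval_bound[OF y d(1)] poly_eval_bound[OF y d(2)] poly_eval_bound[OF y d(3)]
    by (subst finsum_addf[symmetric]) (use y in \<open>auto intro!: finsum_cong simp: scalar_add l_distr\<close>)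
qed

lemma poly_eval_smult:
  assumes y: "y \<in> carrier B"
  shows "ev (Polynomial.smult a p) y = \<tau> a \<otimes> ev p y"
proof -
  have d: "degree (Polynomial.smult a p) < Suc (degree p)" "degree p < Suc (degree p)"
    by (auto simp: le_imp_less_Suc degree_smult_le)
  show ?thesis
    unfolding poly_eval_bound[OF y d(1)] poly_eval_bound[OF y d(2)]
    by (subst finsum_rdistr) (use y in \<open>auto intro!: finsum_cong simp: scalar_mult m_assoc\<close>)
qed

lemma poly_eval_const [simp]: "y \<in> carrier B \<Longrightarrow> ev [:a:] y = \<tau> a"
  using poly_eval_pCons[of y a 0] by simp

lemma poly_eval_one [simp]: "y \<in> carrier B \<Longrightarrow> ev 1 y = \<one>"
  using poly_eval_const[of y 1] by (simp add: one_pCons)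

lemma poly_eval_x [simp]: "y \<in> carrier B \<Longrightarrow> ev [:0, 1:] y = y"
  using poly_eval_pCons[of y 0 "[:1:]"] by simp

lemma poly_eval_mult:
  assumes y: "y \<in> carrier B"
  shows "ev (p * q) y = ev p y \<otimes> ev q y"
proof (induct p rule: pCons_induct)
  case (pCons a p)
  have "ev (pCons a p * q) y = ev (Polynomial.smult a q + pCons 0 (p * q)) y" by simp
  also have "\<dots> = \<tau> a \<otimes> ev q y \<oplus> y \<otimes> (ev p y \<otimes> ev q y)"
    using y pCons by (simp add: poly_eval_add poly_eval_smult poly_eval_pCons)
  also have "\<dots> = ev (pCons a p) y \<otimes> ev q y"
    using y by (simp add: poly_eval_pCons l_distr m_assoc)
  finally show ?case .
qed (use y in simp)

lemma poly_eval_uminus: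
  assumes y: "y \<in> carrier B"
  shows "ev (- p) y = \<ominus> ev p y"
proof -
  have "ev (- p) y \<oplus> ev p y = \<zero>" using poly_eval_add[OF y, of "- p" p] y by simp
  then show ?thesis using y by (simp add: minus_equality)
qed

lemma poly_eval_sum:
  assumes y: "y \<in> carrier B"
  shows "ev (sum f K) y = (\<Oplus>k\<in>K. ev (f k) y)"
proof (cases "finite K")
  case True
  then show ?thesis by (induct K rule: finite_induct) (use y in \<open>auto simp: poly_eval_add\<close>)
qed (use y in \<open>simp add: finsum_infinite\<close>)

lemma poly_eval_power:
  assumes y: "y \<in> carrier B"
  shows "ev (p ^ m) y = ev p y [^] m"
  by (induct m) (use y in \<open>auto simp: poly_eval_mult m_comm\<close>)

lemma poly_eval_pcompose:
  assumes y: "y \<in> carrier B"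
  shows "ev (pcompose p q) y = ev p (ev q y)"
  by (induct p rule: pCons_induct)
     (use y in \<open>simp_all add: pcompose_pCons poly_eval_add poly_eval_mult poly_eval_pCons\<close>)

definition lincomb :: "nat \<Rightarrow> (nat \<Rightarrow> 'a) \<Rightarrow> (nat \<Rightarrow> 'c) \<Rightarrow> 'c" where
  "lincomb n c v = (\<Oplus>i\<in>{..<n}. \<tau> (c i) \<otimes> v i)"

definition spanning :: "nat \<Rightarrow> (nat \<Rightarrow> 'c) \<Rightarrow> bool" where
  "spanning n v \<longleftrightarrow> (\<forall>i<n. v i \<in> carrier B) \<and> (\<forall>y\<in>carrier B. \<exists>c. y = lincomb n c v)"

definition lin_indep :: "nat \<Rightarrow> (nat \<Rightarrow> 'c) \<Rightarrow> bool" where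
  "lin_indep n v \<longleftrightarrow> (\<forall>c. lincomb n c v = \<zero> \<longrightarrow> (\<forall>i<n. c i = 0))"

definition basis :: "nat \<Rightarrow> (nat \<Rightarrow> 'c) \<Rightarrow> bool" where
  "basis n v \<longleftrightarrow> spanning n v \<and> lin_indep n v"

lemma lincomb_closed [simp]: "(\<And>i. i < n \<Longrightarrow> v i \<in> carrier B) \<Longrightarrow> lincomb n c v \<in> carrier B"
  unfolding lincomb_def by (auto intro!: finsum_closed)

lemma lincomb_cong:
  assumes "\<And>i. i < n \<Longrightarrow> v i = w i" and "\<And>i. i < n \<Longrightarrow> w i \<in> carrier B"
  shows "lincomb n c v = lincomb n c w"
  unfolding lincomb_def by (rule finsum_cong') (use assms in auto)

lemma lincomb_zero:
  assumes "\<And>i. i < n \<Longrightarrow> v i \<in> carrier B"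
  shows "lincomb n (\<lambda>i. 0) v = \<zero>"
  unfolding lincomb_def using assms by (auto intro!: finsum_zero' simp: Pi_def)

lemma lincomb_add:
  assumes V: "\<And>i. i < n \<Longrightarrow> v i \<in> carrier B"
  shows "lincomb n (\<lambda>i. c i + d i) v = lincomb n c v \<oplus> lincomb n d v"
proof -
  have "lincomb n (\<lambda>i. c i + d i) v = (\<Oplus>i\<in>{..<n}. \<tau> (c i) \<otimes> v i \<oplus> \<tau> (d i) \<otimes> v i)"
    unfolding lincomb_def by (rule finsum_cong') (use V in \<open>auto simp: scalar_add l_distr\<close>)
  also have "\<dots> = lincomb n c v \<oplus> lincomb n d v"
    unfolding lincomb_def by (rule finsum_addf) (use V in auto)
  finally show ?thesis .
qed

lemma lincomb_smult:
  assumes V: "\<And>i. i < n \<Longrightarrow> v i \<in> carrier B"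
  shows "\<tau> a \<otimes> lincomb n c v = lincomb n (\<lambda>i. a * c i) v"
proof -
  have "\<tau> a \<otimes> lincomb n c v = (\<Oplus>i\<in>{..<n}. \<tau> a \<otimes> (\<tau> (c i) \<otimes> v i))"
    unfolding lincomb_def by (rule finsum_rdistr) (use V in auto)
  also have "\<dots> = lincomb n (\<lambda>i. a * c i) v"
    unfolding lincomb_def by (rule finsum_cong') (use V in \<open>auto simp: scalar_mult m_assoc\<close>)
  finally show ?thesis .
qed

lemma lincomb_uminus:
  assumes V: "\<And>i. i < n \<Longrightarrow> v i \<in> carrier B"
  shows "lincomb n (\<lambda>i. - c i) v = \<ominus> lincomb n c v"
proof -
  have "lincomb n (\<lambda>i. - c i) v \<oplus> lincomb n c v = \<zero>"
    using lincomb_add[OF V, where c = "\<lambda>i. - c i" and d = c] lincomb_zero[OF V] by simp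
  then show ?thesis using V by (simp add: minus_equality)
qed

lemma lincomb_delta:
  assumes V: "\<And>i. i < n \<Longrightarrow> v i \<in> carrier B" and j: "j < n"
  shows "lincomb n (\<lambda>i. if j = i then 1 else 0) v = v j"
proof -
  have "lincomb n (\<lambda>i. if j = i then 1 else 0) v = (\<Oplus>i\<in>{..<n}. if j = i then v i else \<zero>)"
    unfolding lincomb_def by (rule finsum_cong') (use V in auto)
  also have "\<dots> = v j" by (rule finsum_singleton) (use V j in auto)
  finally show ?thesis .
qed

lemma lincomb_lincomb:
  assumes V: "\<And>i. i < n \<Longrightarrow> v i \<in> carrier B"
  shows "lincomb n c (\<lambda>i. lincomb n (P i) v) = lincomb n (\<lambda>j. \<Sum>i<n. c i * P i j) v"
proof -
  have "lincomb n c (\<lambda>i. lincomb n (P i) v) = (\<Oplus>i\<in>{..<n}. \<Oplus>j\<in>{..<n}. \<tau> (c i * P i j) \<otimes> v j)"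
    unfolding lincomb_def[of n c] using lincomb_smult[OF V] V
    by (intro finsum_cong') (auto simp: lincomb_def intro!: finsum_closed)
  also have "\<dots> = (\<Oplus>j\<in>{..<n}. \<Oplus>i\<in>{..<n}. \<tau> (c i * P i j) \<otimes> v j)"
    by (rule finsum_finsum_swap) (use V in auto)
  also have "\<dots> = (\<Oplus>j\<in>{..<n}. (\<Oplus>i\<in>{..<n}. \<tau> (c i * P i j)) \<otimes> v j)"
    by (rule finsum_cong') (use V in \<open>auto simp: finsum_ldistr intro!: finsum_closed\<close>)
  also have "\<dots> = lincomb n (\<lambda>j. \<Sum>i<n. c i * P i j) v"
    unfolding lincomb_def scalar_sum by simp
  finally show ?thesis .
qed

lemma lincomb_unique:
  assumes "lin_indep n v" and V: "\<And>i. i < n \<Longrightarrow> v i \<in> carrier B"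
    and eq: "lincomb n c v = lincomb n d v" and "i < n"
  shows "c i = d i"
proof -
  have "lincomb n (\<lambda>i. c i - d i) v \<oplus> lincomb n d v = lincomb n d v"
    using lincomb_add[OF V, where c = "\<lambda>i. c i - d i" and d = d] eq by simp
  then have "lincomb n (\<lambda>i. c i - d i) v = \<zero>" using V by simp
  then show ?thesis using assms(1,4) unfolding lin_indep_def by fastforce
qed

lemma determinant_trick:
  fixes C :: "'a poly mat"
  assumes \<beta>: "\<And>i. i < n \<Longrightarrow> \<beta> i \<in> carrier B" and y: "y \<in> carrier B"
    and C: "C \<in> carrier_mat n n"
    and rows: "\<And>k. k < n \<Longrightarrow> (\<Oplus>l\<in>{..<n}. ev (C $$ (k, l)) y \<otimes> \<beta> l) = \<zero>"
    and j: "j < n"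
  shows "ev (det C) y \<otimes> \<beta> j = \<zero>"
proof -
  define D where "D = adj_mat C"
  have D: "D \<in> carrier_mat n n" unfolding D_def using adj_mat(1)[OF C] .
  have DC: "(\<Sum>k<n. D $$ (j, k) * C $$ (k, l)) = (if j = l then det C else 0)" if "l < n" for l
    using index_mult_mat_sum[OF D C j that] adj_mat(3)[OF C] that j
    by (cases "j = l") (simp_all add: D_def)
  have "ev (det C) y \<otimes> \<beta> j = (\<Oplus>l\<in>{..<n}. if j = l then ev (det C) y \<otimes> \<beta> l else \<zero>)"
    by (rule finsum_singleton[symmetric]) (use y \<beta> j in auto)
  also have "\<dots> = (\<Oplus>l\<in>{..<n}. ev (\<Sum>k<n. D $$ (j, k) * C $$ (k, l)) y \<otimes> \<beta> l)"
    by (rule finsum_cong') (use y \<beta> in \<open>auto simp: DC\<close>)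
  also have "\<dots> = (\<Oplus>l\<in>{..<n}. \<Oplus>k\<in>{..<n}. ev (D $$ (j, k)) y \<otimes> (ev (C $$ (k, l)) y \<otimes> \<beta> l))"
    by (rule finsum_cong')
       (use y \<beta> in \<open>auto simp: poly_eval_sum poly_eval_mult finsum_ldistr m_assoc
                     intro!: finsum_closed finsum_cong'\<close>)
  also have "\<dots> = (\<Oplus>k\<in>{..<n}. \<Oplus>l\<in>{..<n}. ev (D $$ (j, k)) y \<otimes> (ev (C $$ (k, l)) y \<otimes> \<beta> l))"
    by (rule finsum_finsum_swap) (use y \<beta> in auto)
  also have "\<dots> = (\<Oplus>k\<in>{..<n}. ev (D $$ (j, k)) y \<otimes> (\<Oplus>l\<in>{..<n}. ev (C $$ (k, l)) y \<otimes> \<beta> l))"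
    by (rule finsum_cong') (use y \<beta> in \<open>auto simp: finsum_rdistr intro!: finsum_closed\<close>)
  also have "\<dots> = \<zero>"
    by (rule finsum_zero') (use y rows in auto)
  finally show ?thesis .
qed

lemma char_poly_annihilates:
  fixes A :: "'a mat"
  assumes \<beta>: "\<And>i. i < n \<Longrightarrow> \<beta> i \<in> carrier B" and y: "y \<in> carrier B"
    and A: "A \<in> carrier_mat n n"
    and mult_y: "\<And>k. k < n \<Longrightarrow> y \<otimes> \<beta> k = lincomb n (\<lambda>l. A $$ (k, l)) \<beta>"
    and j: "j < n"
  shows "ev (char_poly A) y \<otimes> \<beta> j = \<zero>"
  unfolding char_poly_def
proof (rule determinant_trick[OF \<beta> y char_poly_matrix_closed[OF A] _ j])
  fix k assume k: "k < n"
  have ev_C: "ev (char_poly_matrix A $$ (k, l)) y = (if k = l then y else \<zero>) \<oplus> \<tau> (- A $$ (k, l))"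
    if "l < n" for l
    using that k y A unfolding char_poly_matrix_def by (simp add: poly_eval_add poly_eval_pCons a_comm)
  have "(\<Oplus>l\<in>{..<n}. ev (char_poly_matrix A $$ (k, l)) y \<otimes> \<beta> l) =
      (\<Oplus>l\<in>{..<n}. (if k = l then y \<otimes> \<beta> l else \<zero>) \<oplus> \<tau> (- A $$ (k, l)) \<otimes> \<beta> l)"
    by (rule finsum_cong') (use y \<beta> k in \<open>auto simp: ev_C l_distr\<close>)
  also have "\<dots> = (\<Oplus>l\<in>{..<n}. (if k = l then y \<otimes> \<beta> l else \<zero>)) \<oplus> lincomb n (\<lambda>l. - A $$ (k, l)) \<beta>"
    unfolding lincomb_def by (rule finsum_addf) (use y \<beta> in auto)
  also have "\<dots> = y \<otimes> \<beta> k \<ominus> y \<otimes> \<beta> k"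
    using finsum_singleton[of k "{..<n}" "\<lambda>l. y \<otimes> \<beta> l"]
      lincomb_uminus[OF \<beta>, where c = "\<lambda>l. A $$ (k, l)"] mult_y[OF k] y \<beta> k
    by (simp add: a_minus_def)
  finally show "(\<Oplus>l\<in>{..<n}. ev (char_poly_matrix A $$ (k, l)) y \<otimes> \<beta> l) = \<zero>"
    using y \<beta> k by (simp add: a_minus_def r_neg)
qed

lemma spanning_annihilator_eq_zero:
  assumes span: "spanning n \<beta>" and z: "z \<in> carrier B" and ann: "\<And>i. i < n \<Longrightarrow> z \<otimes> \<beta> i = \<zero>"
  shows "z = \<zero>"
proof -
  have \<beta>: "\<beta> i \<in> carrier B" if "i < n" for i using span that unfolding spanning_def by blast
  obtain c where c: "\<one> = lincomb n c \<beta>" using span unfolding spanning_def by blast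
  have "z = z \<otimes> lincomb n c \<beta>" unfolding c[symmetric] using z by simp
  also have "\<dots> = (\<Oplus>i\<in>{..<n}. \<tau> (c i) \<otimes> (z \<otimes> \<beta> i))"
    unfolding lincomb_def by (subst finsum_rdistr) (use z \<beta> in \<open>auto intro!: finsum_cong' simp: m_lcomm\<close>)
  also have "\<dots> = \<zero>" by (rule finsum_zero') (use ann in auto)
  finally show ?thesis .
qed

lemma spanning_imp_integral:
  assumes span: "spanning n \<beta>" and y: "y \<in> carrier B"
  obtains p where "degree p = n" and "coeff p n = 1" and "ev p y = \<zero>"
proof -
  have \<beta>: "\<beta> i \<in> carrier B" if "i < n" for i using span that unfolding spanning_def by blast
  have "\<forall>k. \<exists>c. k < n \<longrightarrow> y \<otimes> \<beta> k = lincomb n c \<beta>" using span y \<beta> unfolding spanning_def by blast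
  then obtain M where M: "\<And>k. k < n \<Longrightarrow> y \<otimes> \<beta> k = lincomb n (M k) \<beta>" by metis
  define A where "A = mat n n (\<lambda>(k, l). M k l)"
  have A: "A \<in> carrier_mat n n" unfolding A_def by simp
  have "lincomb n (M k) \<beta> = lincomb n (\<lambda>l. A $$ (k, l)) \<beta>" if "k < n" for k
    unfolding lincomb_def by (rule finsum_cong') (use that \<beta> in \<open>auto simp: A_def\<close>)
  then have mult_y: "y \<otimes> \<beta> k = lincomb n (\<lambda>l. A $$ (k, l)) \<beta>" if "k < n" for k
    using M that by simp
  have "ev (char_poly A) y \<otimes> \<beta> k = \<zero>" if "k < n" for k
    by (rule char_poly_annihilates[OF \<beta> y A mult_y that])
  then have "ev (char_poly A) y = \<zero>"
    by (rule spanning_annihilator_eq_zero[OF span poly_eval_closed[OF y]])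
  then show ?thesis using that degree_monic_char_poly[OF A] by blast
qed

text \<open>Up to its constant term lead_coeff p, the element G^(degree p) * p(u) is the reversed
  polynomial of p evaluated at the inverse G of u.\<close>
lemma power_mult_poly_eval_inverse:
  assumes u: "u \<in> carrier B" and G: "G \<in> carrier B" and uG: "u \<otimes> G = \<one>"
  shows "\<exists>r. G [^] degree p \<otimes> ev p u = \<tau> (lead_coeff p) \<oplus> G \<otimes> ev r G"
proof (induct p rule: pCons_induct)
  case 0
  show ?case by (rule exI[of _ 0]) (use u G in simp)
next
  case (pCons a p)
  show ?case
  proof (cases "p = 0")
    case True
    show ?thesis by (rule exI[of _ 0]) (use u G True in simp)
  next
    case False
    from pCons(2) obtain r where r: "G [^] degree p \<otimes> ev p u = \<tau> (lead_coeff p) \<oplus> G \<otimes> ev r G"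
      by blast
    let ?r = "Polynomial.smult a ([:0, 1:] ^ degree p) + r"
    have ev_r: "ev ?r G = \<tau> a \<otimes> G [^] degree p \<oplus> ev r G"
      using G by (simp add: poly_eval_add poly_eval_smult poly_eval_power)
    have "G [^] degree (pCons a p) \<otimes> ev (pCons a p) u = G [^] Suc (degree p) \<otimes> (\<tau> a \<oplus> u \<otimes> ev p u)"
      using False u by (simp add: poly_eval_pCons)
    also have "\<dots> = \<tau> a \<otimes> G [^] Suc (degree p) \<oplus> (u \<otimes> G) \<otimes> (G [^] degree p \<otimes> ev p u)"
      using u G by (simp add: r_distr m_ac nat_pow_Suc2)
    also have "\<dots> = \<tau> (lead_coeff (pCons a p)) \<oplus> G \<otimes> ev ?r G"
      unfolding uG r ev_r using False u G by (simp add: r_distr m_ac a_ac nat_pow_Suc2)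
    finally show ?thesis by blast
  qed
qed

lemma inverse_is_poly_eval:
  assumes span: "spanning n \<beta>" and u: "u \<in> carrier B" and G: "G \<in> carrier B" and uG: "u \<otimes> G = \<one>"
  obtains r where "u = ev r G"
proof -
  obtain p where p: "degree p = n" "coeff p n = 1" "ev p u = \<zero>"
    using spanning_imp_integral[OF span u] by blast
  obtain r where "G [^] degree p \<otimes> ev p u = \<tau> (lead_coeff p) \<oplus> G \<otimes> ev r G"
    using power_mult_poly_eval_inverse[OF u G uG] by blast
  then have unit: "\<one> \<oplus> G \<otimes> ev r G = \<zero>" using p G by simp
  have "u \<oplus> ev r G = u \<otimes> (\<one> \<oplus> G \<otimes> ev r G)" using u G by (simp add: r_distr uG flip: m_assoc)
  also have "\<dots> = \<zero>" using u by (simp add: unit)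
  finally have "\<ominus> ev r G = u" using u G by (intro minus_equality) auto
  then show ?thesis using G by (intro that[of "- r"]) (simp add: poly_eval_uminus)
qed

lemma poly_eval_in_span_of_powers:
  assumes span: "spanning n \<beta>" and \<xi>: "\<xi> \<in> carrier B"
  shows "\<exists>c. ev f \<xi> = lincomb n c (\<lambda>i. \<xi> [^] i)"
proof -
  obtain \<chi> where \<chi>: "degree \<chi> = n" "coeff \<chi> n = 1" "ev \<chi> \<xi> = \<zero>"
    using spanning_imp_integral[OF span \<xi>] by blast
  then have "\<chi> \<noteq> 0" and "lead_coeff \<chi> = 1" by auto
  obtain q r where qr: "pseudo_divmod f \<chi> = (q, r)" by (cases "pseudo_divmod f \<chi>") auto
  have f: "f = \<chi> * q + r" using pseudo_divmod(1)[OF \<open>\<chi> \<noteq> 0\<close> qr] \<open>lead_coeff \<chi> = 1\<close> by simp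
  have r: "r = 0 \<or> degree r < n" using pseudo_divmod(2)[OF \<open>\<chi> \<noteq> 0\<close> qr] \<chi> by simp
  have "ev f \<xi> = ev r \<xi>" unfolding f using \<xi> \<chi> by (simp add: poly_eval_add poly_eval_mult)
  also have "\<dots> = lincomb n (coeff r) (\<lambda>i. \<xi> [^] i)"
    using r poly_eval_bound[OF \<xi>, of r n] lincomb_zero[where v = "\<lambda>i. \<xi> [^] i"] \<xi>
    unfolding lincomb_def by (auto simp: fun_eq_iff)
  finally show ?thesis by blast
qed

text \<open>If P and Q are the transition matrices between v and the basis \<beta>, uniqueness of
  coordinates gives Q * P = 1, hence P * Q = 1 and P has no nonzero left kernel.\<close>
lemma spanning_imp_lin_indep:
  assumes basis: "basis n \<beta>" and span: "spanning n v"
  shows "lin_indep n v"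
  unfolding lin_indep_def
proof (intro allI impI)
  fix c l assume c: "lincomb n c v = \<zero>" and l: "l < n"
  have \<beta>: "\<And>i. i < n \<Longrightarrow> \<beta> i \<in> carrier B" and indep: "lin_indep n \<beta>"
    using basis unfolding basis_def spanning_def by auto
  have v: "\<And>i. i < n \<Longrightarrow> v i \<in> carrier B" using span unfolding spanning_def by auto
  have "\<forall>i. \<exists>p. i < n \<longrightarrow> v i = lincomb n p \<beta>" using basis v unfolding basis_def spanning_def by blast
  then obtain P where P: "\<And>i. i < n \<Longrightarrow> v i = lincomb n (P i) \<beta>" by metis
  have "\<forall>j. \<exists>q. j < n \<longrightarrow> \<beta> j = lincomb n q v" using span \<beta> unfolding spanning_def by blast
  then obtain Q where Q: "\<And>j. j < n \<Longrightarrow> \<beta> j = lincomb n (Q j) v" by metis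
  define Pm where "Pm = mat n n (\<lambda>(i, j). P i j)"
  define Qm where "Qm = mat n n (\<lambda>(j, i). Q j i)"
  have Pm: "Pm \<in> carrier_mat n n" and Qm: "Qm \<in> carrier_mat n n" unfolding Pm_def Qm_def by auto
  have v_lincomb: "lincomb n d v = lincomb n (\<lambda>j. \<Sum>i<n. d i * P i j) \<beta>" for d
    using lincomb_cong[of n v "\<lambda>i. lincomb n (P i) \<beta>" d] P \<beta> lincomb_lincomb[OF \<beta>] by simp
  have "Qm * Pm = 1\<^sub>m n"
  proof (rule eq_matI)
    fix j k assume jk: "j < dim_row (1\<^sub>m n)" "k < dim_col (1\<^sub>m n)"
    have "lincomb n (\<lambda>k. \<Sum>i<n. Q j i * P i k) \<beta> = lincomb n (\<lambda>k. if j = k then 1 else 0) \<beta>"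
      using Q[of j] lincomb_delta[OF \<beta>, where j = j] jk by (simp add: v_lincomb)
    from lincomb_unique[OF indep \<beta> this, where i = k]
    have "(\<Sum>i<n. Q j i * P i k) = (if j = k then 1 else 0)" using jk by simp
    then show "(Qm * Pm) $$ (j, k) = 1\<^sub>m n $$ (j, k)"
      using index_mult_mat_sum[OF Qm Pm] jk by (simp add: Pm_def Qm_def)
  qed (use Pm Qm in auto)
  then have PQ: "Pm * Qm = 1\<^sub>m n" by (rule mat_left_inverse_imp_right_inverse[OF Pm Qm])
  have "(\<Sum>i<n. c i * P i j) = 0" if "j < n" for j
    using indep c that unfolding lin_indep_def v_lincomb by blast
  then have "(\<Sum>i<n. c i * Pm $$ (i, j)) = 0" if "j < n" for j using that by (simp add: Pm_def)
  then show "c l = 0" by (rule right_invertible_mat_left_kernel[OF Pm Qm PQ _ l])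
qed

theorem powers_basis:
  assumes basis: "basis n \<beta>" and \<xi>: "\<xi> \<in> carrier B"
    and fractions: "\<And>y. y \<in> carrier B \<Longrightarrow> \<exists>f h u. u \<in> carrier B \<and> u \<otimes> ev h \<xi> = \<one> \<and> y = ev f \<xi> \<otimes> u"
  shows "basis n (\<lambda>i. \<xi> [^] i)"
proof -
  have span: "spanning n \<beta>" using basis unfolding basis_def by blast
  have "\<exists>f. y = ev f \<xi>" if y: "y \<in> carrier B" for y
  proof -
    obtain f h u where fhu: "u \<in> carrier B" "u \<otimes> ev h \<xi> = \<one>" "y = ev f \<xi> \<otimes> u"
      using fractions[OF y] by blast
    obtain r where "u = ev r (ev h \<xi>)"
      using inverse_is_poly_eval[OF span fhu(1) _ fhu(2)] \<xi> by auto
    then have "y = ev (f * pcompose r h) \<xi>" using fhu \<xi> by (simp add: poly_eval_mult poly_eval_pcompose)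
    then show ?thesis ..
  qed
  then have "spanning n (\<lambda>i. \<xi> [^] i)"
    using poly_eval_in_span_of_powers[OF span \<xi>] \<xi> unfolding spanning_def by auto
  with spanning_imp_lin_indep[OF basis] show ?thesis by (simp add: basis_def)
qed

end

section \<open>The ring of fractions and its quotient\<close>

lemma loc_den_one [simp]: "1 \<in> loc_den"
  by (simp add: loc_den_def)

lemma loc_den_mult: "g \<in> loc_den \<Longrightarrow> g' \<in> loc_den \<Longrightarrow> g * g' \<in> loc_den"
  by (simp add: loc_den_def)

lemma loc_ring_simps:
  "X \<oplus>\<^bsub>loc_ring \<phi>\<^esub> Y = loc_add \<phi> X Y"
  "X \<otimes>\<^bsub>loc_ring \<phi>\<^esub> Y = loc_mult \<phi> X Y"
  "\<one>\<^bsub>loc_ring \<phi>\<^esub> = loc_class \<phi> 1 1"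
  "\<zero>\<^bsub>loc_ring \<phi>\<^esub> = loc_class \<phi> 0 1"
  by (simp_all add: loc_ring_def)

lemma cross_mult_trans:
  fixes s t f f' f'' g g' g'' :: "'a::comm_ring_1"
  assumes "s * (f * g' - f' * g) = 0" and "t * (f' * g'' - f'' * g') = 0"
  shows "s * t * g' * (f * g'' - f'' * g) = 0"
proof -
  have "s * t * g' * (f * g'' - f'' * g) =
      t * g'' * (s * (f * g' - f' * g)) + s * g * (t * (f' * g'' - f'' * g'))"
    by (simp add: algebra_simps)
  then show ?thesis using assms by simp
qed

lemma cross_mult_add:
  fixes s t f f1 g g1 f' f1' g' g1' :: "'a::comm_ring_1"
  assumes "s * (f * g1 - f1 * g) = 0" and "t * (f' * g1' - f1' * g') = 0"
  shows "s * t * ((f1 * g1' + f1' * g1) * (g * g') - (f * g' + f' * g) * (g1 * g1')) = 0"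
proof -
  have "s * t * ((f1 * g1' + f1' * g1) * (g * g') - (f * g' + f' * g) * (g1 * g1')) =
      - (t * g1' * g' * (s * (f * g1 - f1 * g)) + s * g1 * g * (t * (f' * g1' - f1' * g')))"
    by (simp add: algebra_simps)
  then show ?thesis using assms by simp
qed

lemma cross_mult_mult:
  fixes s t f f1 g g1 f' f1' g' g1' :: "'a::comm_ring_1"
  assumes "s * (f * g1 - f1 * g) = 0" and "t * (f' * g1' - f1' * g') = 0"
  shows "s * t * ((f1 * f1') * (g * g') - (f * f') * (g1 * g1')) = 0"
proof -
  have "s * t * ((f1 * f1') * (g * g') - (f * f') * (g1 * g1')) =
      - (t * f' * g1' * (s * (f * g1 - f1 * g)) + s * f1 * g * (t * (f' * g1' - f1' * g')))"
    by (simp add: algebra_simps)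
  then show ?thesis using assms by simp
qed

locale k_algebra =
  fixes \<phi> :: "'k::field \<Rightarrow> 'a::comm_ring_1"
  assumes k_algebra_map: "k_algebra_map \<phi>"
begin

sublocale poly_hom: map_poly_comm_ring_hom \<phi>
  using k_algebra_map unfolding k_algebra_map_def by unfold_locales auto

lemma loc_rel_equiv: "equiv (UNIV \<times> loc_den) (loc_rel \<phi>)"
proof (rule equivI)
  show "loc_rel \<phi> \<subseteq> (UNIV \<times> loc_den) \<times> (UNIV \<times> loc_den)"
    unfolding loc_rel_def by auto
  show "refl_on (UNIV \<times> loc_den) (loc_rel \<phi>)"
    unfolding loc_rel_def refl_on_def by (auto intro!: bexI[of _ 1])
  show "sym (loc_rel \<phi>)"
  proof (rule symI)
    fix x y assume "(x, y) \<in> loc_rel \<phi>"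
    moreover obtain f g f' g' where "x = (f, g)" "y = (f', g')" by fastforce
    moreover have "a * (f' * b - f * c) = - (a * (f * c - f' * b))" for a b c :: "'a poly"
      by (simp add: algebra_simps)
    ultimately show "(y, x) \<in> loc_rel \<phi>" unfolding loc_rel_def by auto
  qed
  show "trans (loc_rel \<phi>)"
  proof (rule transI)
    fix x y z assume xy: "(x, y) \<in> loc_rel \<phi>" and yz: "(y, z) \<in> loc_rel \<phi>"
    obtain f g f' g' f'' g'' where xyz: "x = (f, g)" "y = (f', g')" "z = (f'', g'')" by fastforce
    from xy obtain s where 1: "g \<in> loc_den" "g' \<in> loc_den" "s \<in> loc_den"
      "map_poly \<phi> s * (f * map_poly \<phi> g' - f' * map_poly \<phi> g) = 0"
      unfolding xyz loc_rel_def by auto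
    from yz obtain t where 2: "g'' \<in> loc_den" "t \<in> loc_den"
      "map_poly \<phi> t * (f' * map_poly \<phi> g'' - f'' * map_poly \<phi> g') = 0"
      unfolding xyz loc_rel_def by auto
    have "map_poly \<phi> (s * t * g') * (f * map_poly \<phi> g'' - f'' * map_poly \<phi> g) = 0"
      using cross_mult_trans[OF 1(4) 2(3)] by (simp add: poly_hom.hom_mult)
    moreover have "s * t * g' \<in> loc_den" using 1 2 by (simp add: loc_den_mult)
    ultimately show "(x, z) \<in> loc_rel \<phi>" unfolding xyz loc_rel_def using 1 2 by blast
  qed
qed

lemma loc_class_eqI:
  assumes "g \<in> loc_den" "g' \<in> loc_den" "s \<in> loc_den"
    and "map_poly \<phi> s * (f * map_poly \<phi> g' - f' * map_poly \<phi> g) = 0"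
  shows "loc_class \<phi> f g = loc_class \<phi> f' g'"
  unfolding loc_class_def
  by (rule equiv_class_eq[OF loc_rel_equiv]) (use assms in \<open>auto simp: loc_rel_def\<close>)

lemma loc_rep_class:
  assumes "g \<in> loc_den"
  obtains f1 g1 s where "loc_rep (loc_class \<phi> f g) = (f1, g1)" and "g1 \<in> loc_den" and "s \<in> loc_den"
    and "map_poly \<phi> s * (f * map_poly \<phi> g1 - f1 * map_poly \<phi> g) = 0"
proof -
  have "(f, g) \<in> loc_class \<phi> f g"
    unfolding loc_class_def by (rule equiv_class_self[OF loc_rel_equiv]) (use assms in auto)
  then have "loc_rep (loc_class \<phi> f g) \<in> loc_class \<phi> f g" unfolding loc_rep_def by (rule someI)
  then have "((f, g), loc_rep (loc_class \<phi> f g)) \<in> loc_rel \<phi>" unfolding loc_class_def by simp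
  then show ?thesis using that unfolding loc_rel_def by (cases "loc_rep (loc_class \<phi> f g)") auto
qed

lemma loc_add_class:
  assumes "g \<in> loc_den" "g' \<in> loc_den"
  shows "loc_add \<phi> (loc_class \<phi> f g) (loc_class \<phi> f' g') =
    loc_class \<phi> (f * map_poly \<phi> g' + f' * map_poly \<phi> g) (g * g')"
proof -
  obtain f1 g1 s where 1: "loc_rep (loc_class \<phi> f g) = (f1, g1)" "g1 \<in> loc_den" "s \<in> loc_den"
    "map_poly \<phi> s * (f * map_poly \<phi> g1 - f1 * map_poly \<phi> g) = 0"
    using loc_rep_class[OF assms(1)] .
  obtain f1' g1' t where 2: "loc_rep (loc_class \<phi> f' g') = (f1', g1')" "g1' \<in> loc_den" "t \<in> loc_den"
    "map_poly \<phi> t * (f' * map_poly \<phi> g1' - f1' * map_poly \<phi> g') = 0"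
    using loc_rep_class[OF assms(2)] .
  show ?thesis
    unfolding loc_add_def 1 2 prod.case
    by (rule loc_class_eqI[where s = "s * t"])
       (use 1 2 assms in \<open>auto simp: loc_den_mult poly_hom.hom_mult intro!: cross_mult_add\<close>)
qed

lemma loc_mult_class:
  assumes "g \<in> loc_den" "g' \<in> loc_den"
  shows "loc_mult \<phi> (loc_class \<phi> f g) (loc_class \<phi> f' g') = loc_class \<phi> (f * f') (g * g')"
proof -
  obtain f1 g1 s where 1: "loc_rep (loc_class \<phi> f g) = (f1, g1)" "g1 \<in> loc_den" "s \<in> loc_den"
    "map_poly \<phi> s * (f * map_poly \<phi> g1 - f1 * map_poly \<phi> g) = 0"
    using loc_rep_class[OF assms(1)] .
  obtain f1' g1' t where 2: "loc_rep (loc_class \<phi> f' g') = (f1', g1')" "g1' \<in> loc_den" "t \<in> loc_den"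
    "map_poly \<phi> t * (f' * map_poly \<phi> g1' - f1' * map_poly \<phi> g') = 0"
    using loc_rep_class[OF assms(2)] .
  show ?thesis
    unfolding loc_mult_def 1 2 prod.case
    by (rule loc_class_eqI[where s = "s * t"])
       (use 1 2 assms in \<open>auto simp: loc_den_mult poly_hom.hom_mult intro!: cross_mult_mult\<close>)
qed

lemma loc_class_closed: "g \<in> loc_den \<Longrightarrow> loc_class \<phi> f g \<in> carrier (loc_ring \<phi>)"
  unfolding loc_ring_def loc_carrier_def loc_class_def by (auto intro!: quotientI)

lemma loc_ring_carrierE:
  assumes "X \<in> carrier (loc_ring \<phi>)"
  obtains f g where "g \<in> loc_den" and "X = loc_class \<phi> f g"
  using assms unfolding loc_ring_def loc_carrier_def loc_class_def by (auto elim!: quotientE)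

lemma loc_mult_comm:
  assumes "X \<in> carrier (loc_ring \<phi>)" and "Y \<in> carrier (loc_ring \<phi>)"
  shows "X \<otimes>\<^bsub>loc_ring \<phi>\<^esub> Y = Y \<otimes>\<^bsub>loc_ring \<phi>\<^esub> X"
proof -
  obtain f g f' g' where "g \<in> loc_den" "X = loc_class \<phi> f g" "g' \<in> loc_den" "Y = loc_class \<phi> f' g'"
    using assms by (elim loc_ring_carrierE)
  then show ?thesis by (simp add: loc_ring_simps loc_mult_class mult.commute)
qed

end

locale loc_quotient = k_algebra \<phi> for \<phi> :: "'k::field \<Rightarrow> 'a::comm_ring_1" +
  fixes I :: "('a poly \<times> 'k poly) set set"
  assumes ideal_I: "ideal I (loc_ring \<phi>)"
begin

abbreviation R where "R \<equiv> loc_ring \<phi>"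
abbreviation Q where "Q \<equiv> R Quot I"
abbreviation res where "res x \<equiv> I +>\<^bsub>R\<^esub> x"
abbreviation scal where "scal a \<equiv> res (loc_scalar \<phi> a)"
abbreviation gen where "gen \<equiv> res (loc_class \<phi> [:0, 1:] 1)"
abbreviation loc_lincomb where
  "loc_lincomb n c v \<equiv> \<Oplus>\<^bsub>R\<^esub> i\<in>{..<n}. loc_scalar \<phi> (c i) \<otimes>\<^bsub>R\<^esub> v i"

sublocale I: ideal I R by (rule ideal_I)

text \<open>The ring axioms of loc_ring \<phi> are part of the hypothesis ideal I (loc_ring \<phi>); only
  commutativity has to be proved.\<close>
sublocale R: cring R
  by (intro cring.intro I.ring_axioms comm_monoid.intro I.is_monoid comm_monoid_axioms.intro
      loc_mult_comm)

sublocale res: ring_hom_cring R Q "(+>\<^bsub>R\<^esub>) I"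
  by (rule I.rcos_ring_hom_cring) (rule R.is_cring)

lemma poly_class_closed [simp]: "loc_class \<phi> f 1 \<in> carrier R"
  by (simp add: loc_class_closed)

lemma poly_class_add: "loc_class \<phi> (f + f') 1 = loc_class \<phi> f 1 \<oplus>\<^bsub>R\<^esub> loc_class \<phi> f' 1"
  by (simp add: loc_ring_simps loc_add_class)

lemma poly_class_mult: "loc_class \<phi> (f * f') 1 = loc_class \<phi> f 1 \<otimes>\<^bsub>R\<^esub> loc_class \<phi> f' 1"
  by (simp add: loc_ring_simps loc_mult_class)

sublocale Q_alg: cring_algebra Q scal
proof
  show "scal a \<in> carrier Q" for a by (simp add: loc_scalar_def)
  show "scal (a + b) = scal a \<oplus>\<^bsub>Q\<^esub> scal b" for a b
    using poly_class_add[of "[:a:]" "[:b:]"] by (simp add: loc_scalar_def)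
  show "scal (a * b) = scal a \<otimes>\<^bsub>Q\<^esub> scal b" for a b
    using poly_class_mult[of "[:a:]" "[:b:]"] by (simp add: loc_scalar_def ac_simps)
  show "scal 1 = \<one>\<^bsub>Q\<^esub>"
    using res.hom_one by (simp add: loc_scalar_def loc_ring_simps flip: one_pCons)
qed

lemma res_poly_class: "res (loc_class \<phi> f 1) = Q_alg.ev f gen"
proof (induct f rule: pCons_induct)
  case 0
  show ?case using res.hom_zero by (simp add: loc_ring_simps)
next
  case (pCons c f)
  have "pCons c f = [:c:] + [:0, 1:] * f" by simp
  then have "loc_class \<phi> (pCons c f) 1 =
      loc_class \<phi> [:c:] 1 \<oplus>\<^bsub>R\<^esub> loc_class \<phi> [:0, 1:] 1 \<otimes>\<^bsub>R\<^esub> loc_class \<phi> f 1"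
    by (metis poly_class_add poly_class_mult)
  then have "res (loc_class \<phi> (pCons c f) 1) = scal c \<oplus>\<^bsub>Q\<^esub> gen \<otimes>\<^bsub>Q\<^esub> res (loc_class \<phi> f 1)"
    by (simp add: loc_scalar_def)
  then show ?case using pCons by (simp add: Q_alg.poly_eval_pCons)
qed

lemma res_loc_xpow: "res (loc_xpow \<phi> i) = gen [^]\<^bsub>Q\<^esub> i"
  using res_poly_class[of "[:0, 1:] ^ i"]
  by (simp add: loc_xpow_def monom_altdef Q_alg.poly_eval_power)

lemma res_surj:
  assumes "Y \<in> carrier Q"
  obtains y where "y \<in> carrier R" and "Y = res y"
  using assms unfolding FactRing_def A_RCOSETS_def' by auto

lemma res_fraction:
  assumes "y \<in> carrier Q"
  shows "\<exists>f h u. u \<in> carrier Q \<and> u \<otimes>\<^bsub>Q\<^esub> Q_alg.ev h gen = \<one>\<^bsub>Q\<^esub> \<and> y = Q_alg.ev f gen \<otimes>\<^bsub>Q\<^esub> u"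
proof -
  obtain x where x: "x \<in> carrier R" "y = res x" using assms by (rule res_surj)
  then obtain f g where g: "g \<in> loc_den" and fg: "x = loc_class \<phi> f g"
    by (elim loc_ring_carrierE)
  define u where "u = res (loc_class \<phi> 1 g)"
  have "loc_class \<phi> 1 g \<otimes>\<^bsub>R\<^esub> loc_class \<phi> (map_poly \<phi> g) 1 = \<one>\<^bsub>R\<^esub>"
    unfolding loc_ring_simps loc_mult_class[OF g loc_den_one]
    by (rule loc_class_eqI) (use g in auto)
  then have "u \<otimes>\<^bsub>Q\<^esub> Q_alg.ev (map_poly \<phi> g) gen = \<one>\<^bsub>Q\<^esub>"
    unfolding u_def res_poly_class[symmetric] using g by (metis loc_class_closed poly_class_closed res.hom_mult res.hom_one)
  moreover have "y = Q_alg.ev f gen \<otimes>\<^bsub>Q\<^esub> u"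
    unfolding x(2) fg u_def res_poly_class[symmetric] using g
    by (simp add: loc_class_closed loc_ring_simps loc_mult_class flip: res.hom_mult)
  moreover have "u \<in> carrier Q" unfolding u_def using g by (simp add: loc_class_closed)
  ultimately show ?thesis by blast
qed

lemma res_eq_zero_iff:
  assumes "x \<in> carrier R"
  shows "res x = \<zero>\<^bsub>Q\<^esub> \<longleftrightarrow> x \<in> I"
proof
  assume "res x = \<zero>\<^bsub>Q\<^esub>"
  then show "x \<in> I" unfolding FactRing_def by (intro I.rcos_const_imp_mem[OF assms]) simp
next
  assume "x \<in> I"
  then show "res x = \<zero>\<^bsub>Q\<^esub>" unfolding FactRing_def by (simp add: I.a_rcos_zero[OF ideal_I])
qed

lemma res_loc_lincomb:
  assumes v: "\<And>i. i < n \<Longrightarrow> v i \<in> carrier R"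
  shows "res (loc_lincomb n c v) = Q_alg.lincomb n c (\<lambda>i. res (v i))"
proof -
  have "res (loc_lincomb n c v) = finsum Q ((+>\<^bsub>R\<^esub>) I \<circ> (\<lambda>i. loc_scalar \<phi> (c i) \<otimes>\<^bsub>R\<^esub> v i)) {..<n}"
    by (rule res.hom_finsum) (simp add: Pi_iff v loc_scalar_def)
  also have "\<dots> = Q_alg.lincomb n c (\<lambda>i. res (v i))"
    unfolding Q_alg.lincomb_def
    by (rule res.S.finsum_cong') (simp_all add: Pi_iff v loc_scalar_def)
  finally show ?thesis .
qed

lemma loc_lincomb_closed: "(\<And>i. i < n \<Longrightarrow> v i \<in> carrier R) \<Longrightarrow> loc_lincomb n c v \<in> carrier R"
  by (auto simp: loc_scalar_def intro!: I.finsum_closed)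

lemma quot_spanning_iff:
  assumes b: "\<And>i. i < n \<Longrightarrow> b i \<in> carrier R"
  shows "(\<forall>y\<in>carrier R. \<exists>c. \<exists>z\<in>I. y = loc_lincomb n c b \<oplus>\<^bsub>R\<^esub> z) \<longleftrightarrow>
    Q_alg.spanning n (\<lambda>i. res (b i))"
proof
  assume span_R: "\<forall>y\<in>carrier R. \<exists>c. \<exists>z\<in>I. y = loc_lincomb n c b \<oplus>\<^bsub>R\<^esub> z"
  have "\<exists>c. Y = Q_alg.lincomb n c (\<lambda>i. res (b i))" if Y: "Y \<in> carrier Q" for Y
  proof -
    obtain y where y: "y \<in> carrier R" "Y = res y" using Y by (rule res_surj)
    then obtain c z where z: "z \<in> I" "y = loc_lincomb n c b \<oplus>\<^bsub>R\<^esub> z" using span_R by blast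
    have "res z = \<zero>\<^bsub>Q\<^esub>" using z(1) I.a_subset res_eq_zero_iff by blast
    then have "Y = res (loc_lincomb n c b)" using y z b I.a_subset by (auto simp: loc_lincomb_closed)
    then show ?thesis using res_loc_lincomb[where n = n and v = b, OF b] by auto
  qed
  then show "Q_alg.spanning n (\<lambda>i. res (b i))" unfolding Q_alg.spanning_def using b by simp
next
  assume span_Q: "Q_alg.spanning n (\<lambda>i. res (b i))"
  have "\<exists>c. \<exists>z\<in>I. y = loc_lincomb n c b \<oplus>\<^bsub>R\<^esub> z" if y: "y \<in> carrier R" for y
  proof -
    obtain c where "res y = Q_alg.lincomb n c (\<lambda>i. res (b i))"
      using span_Q res.hom_closed[OF y] unfolding Q_alg.spanning_def by auto
    then have "res y = res (loc_lincomb n c b)" using res_loc_lincomb[where n = n and v = b, OF b] by simp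
    then have "y \<ominus>\<^bsub>R\<^esub> loc_lincomb n c b \<in> I"
      using I.quotient_eq_iff_same_a_r_cos[OF ideal_I y loc_lincomb_closed[where n = n and v = b, OF b]] by simp
    moreover have "y = loc_lincomb n c b \<oplus>\<^bsub>R\<^esub> (y \<ominus>\<^bsub>R\<^esub> loc_lincomb n c b)"
      using y loc_lincomb_closed[where n = n and v = b, OF b]
      by (simp add: a_minus_def I.add.m_lcomm I.r_neg)
    ultimately show ?thesis by blast
  qed
  then show "\<forall>y\<in>carrier R. \<exists>c. \<exists>z\<in>I. y = loc_lincomb n c b \<oplus>\<^bsub>R\<^esub> z" by blast
qed

lemma quot_lin_indep_iff:
  assumes b: "\<And>i. i < n \<Longrightarrow> b i \<in> carrier R"
  shows "(\<forall>c. loc_lincomb n c b \<in> I \<longrightarrow> (\<forall>i<n. c i = 0)) \<longleftrightarrow> Q_alg.lin_indep n (\<lambda>i. res (b i))"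
proof -
  have "Q_alg.lincomb n c (\<lambda>i. res (b i)) = \<zero>\<^bsub>Q\<^esub> \<longleftrightarrow> loc_lincomb n c b \<in> I" for c
    using res_loc_lincomb[where n = n and v = b, OF b]
      res_eq_zero_iff[OF loc_lincomb_closed[where n = n and v = b, OF b]] by simp
  then show ?thesis unfolding Q_alg.lin_indep_def by simp
qed

lemma quot_basis_iff:
  "quot_basis \<phi> I n b \<longleftrightarrow> (\<forall>i<n. b i \<in> carrier R) \<and> Q_alg.basis n (\<lambda>i. res (b i))"
proof (cases "\<forall>i<n. b i \<in> carrier R")
  case True
  then have b: "\<And>i. i < n \<Longrightarrow> b i \<in> carrier R" by blast
  show ?thesis
    unfolding quot_basis_def Q_alg.basis_def
    using True quot_spanning_iff[where n = n and b = b, OF b] quot_lin_indep_iff[where n = n and b = b, OF b]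
    by simp
qed (unfold quot_basis_def, blast)

end

theorem lemma3p2:
  fixes \<phi> :: "'k::field \<Rightarrow> 'a::comm_ring_1"
    and I :: "('a poly \<times> 'k poly) set set"
    and n :: nat
  assumes "k_algebra_map \<phi>"
    and "ideal I (loc_ring \<phi>)"
    and "\<exists>b. quot_basis \<phi> I n b"
  shows "quot_basis \<phi> I n (loc_xpow \<phi>)"
proof -
  interpret loc_quotient \<phi> I
    by (intro loc_quotient.intro k_algebra.intro loc_quotient_axioms.intro assms(1,2))
  from assms(3) obtain b where "quot_basis \<phi> I n b" by blast
  then have "Q_alg.basis n (\<lambda>i. res (b i))" by (simp add: quot_basis_iff)
  then have "Q_alg.basis n (\<lambda>i. gen [^]\<^bsub>Q\<^esub> i)"
    by (rule Q_alg.powers_basis) (use res_fraction in auto)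
  moreover have "loc_xpow \<phi> i \<in> carrier R" for i by (simp add: loc_xpow_def)
  ultimately show ?thesis by (simp add: quot_basis_iff res_loc_xpow)
qed

end
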